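(* For every $n\geq1$, $r(n)$ equals the number of cyclic and palindromic compositions of $n$ with all parts in $\{2,3\}$, i.e. the number of equivalence classes (under cyclic rotation and reversal) of sequences $(a_1,\dots,a_m)$, $m\geq1$, $a_i\in\{2,3\}$, $\sum_i a_i=n$, such that the reversed sequence $(a_m,\dots,a_1)$ is a cyclic rotation of $(a_1,\dots,a_m)$.
   Context: The (shifted) Padovan sequence is $q(1)=0$, $q(2)=1$, $q(3)=1$, $q(n)=q(n-2)+q(n-3)$ for $n\geq4$. The sequence $r$ is defined by $r(2k-1)=q(k)$ and $r(2k)=q(k+2)$ for $k\geq1$. *)

theory Defs
  imports Main
begin

text \<open>Shifted Padovan sequence: q 1 = 0, q 2 = 1, q 3 = 1, q n = q (n-2) + q (n-3) for n >= 4.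
  The value at 0 is an unused junk value.\<close>
fun q :: "nat \<Rightarrow> nat" where
  "q 0 = 0"
| "q (Suc 0) = 0"
| "q (Suc (Suc 0)) = 1"
| "q (Suc (Suc (Suc 0))) = 1"
| "q (Suc (Suc (Suc (Suc n)))) = q (Suc (Suc n)) + q (Suc n)"

text \<open>r (2k-1) = q k and r (2k) = q (k+2) for k >= 1 (value at 0 is junk).\<close>
definition r :: "nat \<Rightarrow> nat" where
  "r n = (if odd n then q ((n + 1) div 2) else q (n div 2 + 2))"

definition comps23 :: "nat \<Rightarrow> nat list set" where
  "comps23 n = {xs. xs \<noteq> [] \<and> set xs \<subseteq> {2, 3} \<and> sum_list xs = n}"

definition dihedral_rel :: "(nat list \<times> nat list) set" where
  "dihedral_rel = {(xs, ys). \<exists>k. ys = rotate k xs \<or> ys = rev (rotate k xs)}"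

definition cyc_palindromic :: "nat list \<Rightarrow> bool" where
  "cyc_palindromic xs \<longleftrightarrow> (\<exists>k. rev xs = rotate k xs)"

definition num_cyc_pal_comps23 :: "nat \<Rightarrow> nat" where
  "num_cyc_pal_comps23 n =
     card ({xs \<in> comps23 n. cyc_palindromic xs} // (dihedral_rel \<inter> {xs \<in> comps23 n. cyc_palindromic xs} \<times> {xs \<in> comps23 n. cyc_palindromic xs}))"

end

theory Submission
  imports Defs "HOL-Number_Theory.Cong"
begin

(* Let w be cyclically palindromic, rev w = rotate j w, with rotation period p.  The rotation
   rotate k w satisfies rev = rotate d exactly when 2k + d = j (mod p), and as (k, d) ranges over
   [0, p) x {0, 1} the number 2k + d hits each residue class mod p exactly twice.  So every
   rotation class contains exactly two words that are palindromes (d = 0) or become palindromes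
   after removing their first part (d = 1).  For cyclically palindromic words dihedral classes are
   rotation classes, hence twice the number of classes is P(n) + P(n-2) + P(n-3), where P counts
   palindromic compositions with parts 2 and 3.  Stripping the equal first and last parts gives
   P(n) = P(n-4) + P(n-6), a recurrence that r also satisfies, and the initial values agree. *)

section \<open>Rotation classes and the rotation period\<close>

lemma inj_rotate: "inj (rotate n)"
  by (simp add: rotate_def inj_rotate1)

definition rotations :: "'a list \<Rightarrow> 'a list set" where
  "rotations xs = range (\<lambda>k. rotate k xs)"

lemma rotate_in_rotations [simp]: "rotate k xs \<in> rotations xs"
  by (simp add: rotations_def)

lemma self_in_rotations [simp]: "xs \<in> rotations xs"
  using rotate_in_rotations[of 0 xs] by simp

lemma rotations_mono: "ys \<in> rotations xs \<Longrightarrow> rotations ys \<subseteq> rotations xs"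
  by (auto simp: rotations_def rotate_rotate)

lemma rotations_rotate [simp]: "rotations (rotate k xs) = rotations xs"
proof
  show "rotations (rotate k xs) \<subseteq> rotations xs"
    by (simp add: rotations_mono)
  have "rotate (length xs * k - k) (rotate k xs) = xs"
  proof (cases "xs = []")
    case False
    then have "k \<le> length xs * k"
      by (auto simp: Suc_le_eq)
    then show ?thesis
      by (simp add: rotate_rotate)
  qed simp
  then have "xs \<in> rotations (rotate k xs)"
    by (metis rotate_in_rotations)
  then show "rotations xs \<subseteq> rotations (rotate k xs)"
    by (rule rotations_mono)
qed

lemma rotations_eq:
  assumes "ys \<in> rotations xs"
  shows "rotations ys = rotations xs"
proof -
  obtain k where "ys = rotate k xs"
    using assms by (auto simp: rotations_def)
  then show ?thesis
    by simp
qed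

definition rotation_period :: "'a list \<Rightarrow> nat" where
  "rotation_period xs = (LEAST d. 0 < d \<and> rotate d xs = xs)"

lemma rotation_period:
  assumes "xs \<noteq> []"
  shows "0 < rotation_period xs" "rotate (rotation_period xs) xs = xs"
proof -
  have "0 < length xs \<and> rotate (length xs) xs = xs"
    using assms by simp
  then have "0 < rotation_period xs \<and> rotate (rotation_period xs) xs = xs"
    unfolding rotation_period_def by (rule LeastI)
  then show "0 < rotation_period xs" "rotate (rotation_period xs) xs = xs"
    by auto
qed

lemma rotate_mult_rotation_period:
  assumes "xs \<noteq> []"
  shows "rotate (m * rotation_period xs) xs = xs"
proof (induction m)
  case (Suc m)
  have "rotate (Suc m * rotation_period xs) xs
      = rotate (rotation_period xs) (rotate (m * rotation_period xs) xs)"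
    by (simp add: rotate_rotate)
  then show ?case
    using Suc rotation_period(2)[OF assms] by simp
qed simp

lemma rotate_eq_self_iff:
  assumes "xs \<noteq> []"
  shows "rotate d xs = xs \<longleftrightarrow> rotation_period xs dvd d"
proof
  let ?p = "rotation_period xs"
  assume "rotate d xs = xs"
  moreover have "rotate d xs = rotate (d mod ?p) (rotate (d div ?p * ?p) xs)"
    by (simp only: rotate_rotate mod_div_mult_eq)
  ultimately have "rotate (d mod ?p) xs = xs"
    by (simp add: rotate_mult_rotation_period[OF assms])
  moreover have "d mod ?p < ?p"
    using rotation_period(1)[OF assms] by simp
  ultimately have "\<not> 0 < d mod ?p"
    using not_less_Least[of "d mod ?p" "\<lambda>d. 0 < d \<and> rotate d xs = xs"]
    by (auto simp: rotation_period_def)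
  then show "?p dvd d"
    by (simp add: dvd_eq_mod_eq_0)
next
  assume "rotation_period xs dvd d"
  then obtain m where "d = m * rotation_period xs"
    by (metis dvd_def mult.commute)
  then show "rotate d xs = xs"
    by (simp add: rotate_mult_rotation_period[OF assms])
qed

lemma rotation_period_dvd_length: "xs \<noteq> [] \<Longrightarrow> rotation_period xs dvd length xs"
  using rotate_eq_self_iff[of xs "length xs"] by simp

lemma rotation_period_le_length: "xs \<noteq> [] \<Longrightarrow> rotation_period xs \<le> length xs"
  by (simp add: dvd_imp_le rotation_period_dvd_length)

lemma rotate_eq_rotate_iff:
  assumes "xs \<noteq> []"
  shows "rotate a xs = rotate b xs \<longleftrightarrow> [a = b] (mod rotation_period xs)"
proof -
  have *: "rotate a xs = rotate b xs \<longleftrightarrow> [a = b] (mod rotation_period xs)" if "a \<le> b" for a b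
  proof -
    have "rotate b xs = rotate a (rotate (b - a) xs)"
      using that by (simp add: rotate_rotate)
    then have "rotate a xs = rotate b xs \<longleftrightarrow> rotate (b - a) xs = xs"
      by (auto simp: inj_eq[OF inj_rotate])
    also have "\<dots> \<longleftrightarrow> rotation_period xs dvd b - a"
      by (rule rotate_eq_self_iff[OF assms])
    also have "\<dots> \<longleftrightarrow> [b = a] (mod rotation_period xs)"
      using that by (simp add: cong_def mod_eq_dvd_iff_nat)
    also have "\<dots> \<longleftrightarrow> [a = b] (mod rotation_period xs)"
      by (rule cong_sym_eq)
    finally show ?thesis .
  qed
  show ?thesis
  proof (cases "a \<le> b")
    case False
    then show ?thesis
      using *[of b a] by (metis cong_sym_eq nle_le)
  qed (rule *)
qed

lemma rotations_conv_rotation_period: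
  assumes "xs \<noteq> []"
  shows "rotations xs = (\<lambda>k. rotate k xs) ` {..<rotation_period xs}"
proof -
  have "rotate k xs \<in> (\<lambda>k. rotate k xs) ` {..<rotation_period xs}" for k
  proof (rule image_eqI)
    show "rotate k xs = rotate (k mod rotation_period xs) xs"
      using rotate_eq_rotate_iff[OF assms] by (simp add: cong_def)
    show "k mod rotation_period xs \<in> {..<rotation_period xs}"
      using rotation_period(1)[OF assms] by simp
  qed
  then show ?thesis
    by (auto simp: rotations_def)
qed

lemma inj_on_rotate_rotation_period:
  assumes "xs \<noteq> []"
  shows "inj_on (\<lambda>k. rotate k xs) {..<rotation_period xs}"
  using rotate_eq_rotate_iff[OF assms] by (auto simp: inj_on_def cong_def)

section \<open>Palindromes in a rotation class\<close>

lemma rev_rotate: "k < length xs \<Longrightarrow> rev (rotate k xs) = rotate (length xs - k) (rev xs)"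
  by (cases "k = 0") (simp_all add: rotate_drop_take rev_drop rev_take)

lemma cyc_palindromic_iff_rev_in_rotations: "cyc_palindromic xs \<longleftrightarrow> rev xs \<in> rotations xs"
  by (auto simp: cyc_palindromic_def rotations_def)

lemma rev_in_rotations:
  assumes "cyc_palindromic xs" "ys \<in> rotations xs"
  shows "rev ys \<in> rotations xs"
proof (cases "xs = []")
  case False
  obtain j where j: "rev xs = rotate j xs"
    using assms(1) by (auto simp: cyc_palindromic_def)
  obtain k where "ys = rotate k xs"
    using assms(2) by (auto simp: rotations_def)
  then have "rev ys = rev (rotate (k mod length xs) xs)"
    by (metis rotate_conv_mod)
  also have "\<dots> = rotate (length xs - k mod length xs) (rotate j xs)"
    using False by (simp add: rev_rotate j)
  finally show ?thesis
    by (simp add: rotate_rotate)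
qed (use assms in \<open>simp add: rotations_def\<close>)

lemma cyc_palindromic_rotate: "cyc_palindromic xs \<Longrightarrow> cyc_palindromic (rotate k xs)"
  using rev_in_rotations[of xs "rotate k xs"] by (simp add: cyc_palindromic_iff_rev_in_rotations)

lemma dihedral_rel_iff_rotations:
  assumes "cyc_palindromic xs"
  shows "(xs, ys) \<in> dihedral_rel \<longleftrightarrow> ys \<in> rotations xs"
  using rev_in_rotations[OF assms, of "rev ys"]
  by (auto simp: dihedral_rel_def rotations_def)

lemma rev_rotate_eq_rotate_rotate_iff:
  assumes "xs \<noteq> []" "rev xs = rotate j xs" "k < length xs"
  shows "rev (rotate k xs) = rotate d (rotate k xs) \<longleftrightarrow> [2 * k + d = j] (mod rotation_period xs)"
proof -
  let ?p = "rotation_period xs"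
  have "rev (rotate k xs) = rotate d (rotate k xs) \<longleftrightarrow> rotate (length xs - k + j) xs = rotate (d + k) xs"
    using assms by (simp add: rev_rotate rotate_rotate)
  also have "\<dots> \<longleftrightarrow> [length xs - k + j = d + k] (mod ?p)"
    by (rule rotate_eq_rotate_iff[OF assms(1)])
  also have "\<dots> \<longleftrightarrow> [length xs - k + j + k = d + k + k] (mod ?p)"
    by (rule cong_add_rcancel_nat[symmetric])
  also have "length xs - k + j + k = length xs + j"
    using assms(3) by simp
  also have "d + k + k = 2 * k + d"
    by simp
  also have "[length xs + j = 2 * k + d] (mod ?p) \<longleftrightarrow> [j = 2 * k + d] (mod ?p)"
    using rotation_period_dvd_length[OF assms(1)] by (auto simp: cong_def elim!: dvdE)
  finally show ?thesis
    by (simp add: cong_sym_eq)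
qed

lemma card_double_residues:
  fixes g c :: nat
  assumes "0 < g"
  shows "card {k. k < g \<and> [2 * k = c] (mod g)} + card {k. k < g \<and> [2 * k + 1 = c] (mod g)} = 2"
proof -
  let ?A = "{k. k < g \<and> [2 * k = c] (mod g)}" and ?B = "{k. k < g \<and> [2 * k + 1 = c] (mod g)}"
  have "(\<lambda>k. 2 * k) ` ?A \<union> (\<lambda>k. 2 * k + 1) ` ?B = {s. s < 2 * g \<and> [s = c] (mod g)}"
  proof (intro set_eqI iffI)
    fix s
    assume "s \<in> {s. s < 2 * g \<and> [s = c] (mod g)}"
    then show "s \<in> (\<lambda>k. 2 * k) ` ?A \<union> (\<lambda>k. 2 * k + 1) ` ?B"
      by (cases "even s") (auto elim!: evenE oddE)
  qed auto
  also have "\<dots> = {c mod g, c mod g + g}"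
  proof (intro set_eqI iffI)
    fix s
    assume "s \<in> {s. s < 2 * g \<and> [s = c] (mod g)}"
    then show "s \<in> {c mod g, c mod g + g}"
      by (cases "s < g") (auto simp: cong_def le_mod_geq)
  qed (use mod_less_divisor[OF assms, of c] in \<open>auto simp: cong_def\<close>)
  finally have "card ((\<lambda>k. 2 * k) ` ?A \<union> (\<lambda>k. 2 * k + 1) ` ?B) = 2"
    using assms by simp
  moreover have "card ((\<lambda>k. 2 * k) ` ?A \<union> (\<lambda>k. 2 * k + 1) ` ?B) = card ?A + card ?B"
    by (subst card_Un_disjoint) (auto simp: card_image inj_on_def, presburger)
  ultimately show ?thesis
    by simp
qed

lemma card_palindromic_rotations:
  assumes "xs \<noteq> []" "cyc_palindromic xs"
  shows "card {ys \<in> rotations xs. rev ys = ys} + card {ys \<in> rotations xs. rev ys = rotate1 ys} = 2"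
proof -
  let ?p = "rotation_period xs"
  obtain j where j: "rev xs = rotate j xs"
    using assms(2) by (auto simp: cyc_palindromic_def)
  have "card {ys \<in> rotations xs. rev ys = rotate d ys} = card {k. k < ?p \<and> [2 * k + d = j] (mod ?p)}"
    for d
  proof -
    have "rev (rotate k xs) = rotate d (rotate k xs) \<longleftrightarrow> [2 * k + d = j] (mod ?p)" if "k < ?p" for k
      using that rev_rotate_eq_rotate_rotate_iff[OF assms(1) j] rotation_period_le_length[OF assms(1)]
      by simp
    then have "{ys \<in> rotations xs. rev ys = rotate d ys}
        = (\<lambda>k. rotate k xs) ` {k. k < ?p \<and> [2 * k + d = j] (mod ?p)}"
      unfolding rotations_conv_rotation_period[OF assms(1)] by auto
    moreover have "inj_on (\<lambda>k. rotate k xs) {k. k < ?p \<and> [2 * k + d = j] (mod ?p)}"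
      by (rule inj_on_subset[OF inj_on_rotate_rotation_period[OF assms(1)]]) auto
    ultimately show ?thesis
      by (simp add: card_image)
  qed
  from this[of 0] this[of 1] show ?thesis
    using card_double_residues[OF rotation_period(1)[OF assms(1)], of j] by simp
qed

lemma card_eq_sum_card_rotation_classes:
  assumes "finite S" "\<And>xs. xs \<in> S \<Longrightarrow> rotations xs \<subseteq> S"
  shows "card {xs \<in> S. P xs} = (\<Sum>C \<in> rotations ` S. card {xs \<in> C. P xs})"
proof -
  have "{xs \<in> S. P xs} = (\<Union>C \<in> rotations ` S. {xs \<in> C. P xs})"
    using assms(2) self_in_rotations by blast
  moreover have "card (\<Union>C \<in> rotations ` S. {xs \<in> C. P xs}) = (\<Sum>C \<in> rotations ` S. card {xs \<in> C. P xs})"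
  proof (rule card_UN_disjoint)
    show "finite (rotations ` S)"
      using assms(1) by simp
    show "\<forall>C \<in> rotations ` S. finite {xs \<in> C. P xs}"
      using assms by (auto intro: finite_subset)
    show "\<forall>C \<in> rotations ` S. \<forall>D \<in> rotations ` S. C \<noteq> D \<longrightarrow> {xs \<in> C. P xs} \<inter> {xs \<in> D. P xs} = {}"
      using rotations_eq by blast
  qed
  ultimately show ?thesis
    by simp
qed

lemma card_palindromes_add_card_rotate1_palindromes:
  assumes "finite S" "\<And>xs. xs \<in> S \<Longrightarrow> rotations xs \<subseteq> S"
    and "\<And>xs. xs \<in> S \<Longrightarrow> xs \<noteq> [] \<and> cyc_palindromic xs"
  shows "card {xs \<in> S. rev xs = xs} + card {xs \<in> S. rev xs = rotate1 xs} = 2 * card (rotations ` S)"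
proof -
  have "card {xs \<in> S. rev xs = xs} + card {xs \<in> S. rev xs = rotate1 xs}
      = (\<Sum>C \<in> rotations ` S. card {xs \<in> C. rev xs = xs} + card {xs \<in> C. rev xs = rotate1 xs})"
    by (simp add: card_eq_sum_card_rotation_classes[OF assms(1,2)] sum.distrib)
  also have "\<dots> = (\<Sum>C \<in> rotations ` S. 2)"
    using assms(3) by (intro sum.cong) (auto simp: card_palindromic_rotations)
  finally show ?thesis
    by simp
qed

section \<open>Cyclically palindromic compositions\<close>

lemma quotient_dihedral_rel:
  assumes "\<And>xs. xs \<in> S \<Longrightarrow> cyc_palindromic xs" "\<And>xs. xs \<in> S \<Longrightarrow> rotations xs \<subseteq> S"
  shows "S // (dihedral_rel \<inter> S \<times> S) = rotations ` S"
proof -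
  have "(dihedral_rel \<inter> S \<times> S) `` {xs} = rotations xs" if "xs \<in> S" for xs
    using that assms dihedral_rel_iff_rotations by blast
  then show ?thesis
    by (auto simp: quotient_def)
qed

lemma sum_list_rotate: "sum_list (rotate k xs) = sum_list (xs :: 'a :: comm_monoid_add list)"
  by (metis rotate_drop_take sum_list_append append_take_drop_id add.commute)

lemma finite_lists_sum_list:
  assumes "finite A" "0 \<notin> A"
  shows "finite {w :: nat list. set w \<subseteq> A \<and> sum_list w = n}"
proof -
  have "length w \<le> sum_list w" if "0 \<notin> set w" for w :: "nat list"
    using that by (induction w) (auto simp: Suc_le_eq)
  then have "{w. set w \<subseteq> A \<and> sum_list w = n} \<subseteq> {w. set w \<subseteq> A \<and> length w \<le> n}"
    using assms(2) by auto
  then show ?thesis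
    using finite_lists_length_le[OF assms(1)] by (rule finite_subset)
qed

lemma finite_comps23: "finite (comps23 n)"
  by (rule finite_subset[OF _ finite_lists_sum_list[of "{2, 3}" n]]) (auto simp: comps23_def)

lemma rotations_comps23: "xs \<in> comps23 n \<Longrightarrow> rotations xs \<subseteq> comps23 n"
  by (auto simp: comps23_def rotations_def sum_list_rotate)

definition palindromes23 :: "nat \<Rightarrow> nat list set" where
  "palindromes23 n = {w. set w \<subseteq> {2, 3} \<and> sum_list w = n \<and> rev w = w}"

definition rotate1_palindromes23 :: "nat \<Rightarrow> nat list set" where
  "rotate1_palindromes23 n = {w. set w \<subseteq> {2, 3} \<and> sum_list w = n \<and> rev w = rotate1 w}"

lemma two_mul_num_cyc_pal_comps23:
  assumes "1 \<le> n"
  shows "2 * num_cyc_pal_comps23 n = card (palindromes23 n) + card (rotate1_palindromes23 n)"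
proof -
  let ?S = "{xs \<in> comps23 n. cyc_palindromic xs}"
  have closed: "rotations xs \<subseteq> ?S" if "xs \<in> ?S" for xs
  proof
    fix ys
    assume "ys \<in> rotations xs"
    then obtain k where "ys = rotate k xs"
      by (auto simp: rotations_def)
    then show "ys \<in> ?S"
      using that rotations_comps23[of xs n] cyc_palindromic_rotate[of xs k] by auto
  qed
  have nonempty: "xs \<noteq> [] \<and> cyc_palindromic xs" if "xs \<in> ?S" for xs
    using that by (simp add: comps23_def)
  have "num_cyc_pal_comps23 n = card (rotations ` ?S)"
    unfolding num_cyc_pal_comps23_def by (subst quotient_dihedral_rel) (use closed in auto)
  moreover have "rev xs = rotate d xs \<Longrightarrow> cyc_palindromic xs" for xs d
    by (auto simp: cyc_palindromic_def)
  then have "{xs \<in> ?S. rev xs = rotate d xs} = {w. set w \<subseteq> {2, 3} \<and> sum_list w = n \<and> rev w = rotate d w}"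
    for d
    using assms by (auto simp: comps23_def)
  from this[of 0] this[of 1]
  have "{xs \<in> ?S. rev xs = xs} = palindromes23 n" "{xs \<in> ?S. rev xs = rotate1 xs} = rotate1_palindromes23 n"
    by (simp_all add: palindromes23_def rotate1_palindromes23_def)
  ultimately show ?thesis
    using card_palindromes_add_card_rotate1_palindromes[of ?S, OF _ closed nonempty] finite_comps23
    by simp
qed

section \<open>Counting palindromic compositions with parts 2 and 3\<close>

lemma finite_palindromes23: "finite (palindromes23 n)"
  by (rule finite_subset[OF _ finite_lists_sum_list[of "{2, 3}" n]]) (auto simp: palindromes23_def)

lemma lists23_sum_list_le5:
  assumes "set w \<subseteq> {2, 3 :: nat}" "sum_list w \<le> 5"
  shows "w \<in> {[], [2], [3], [2, 2], [2, 3], [3, 2]}"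
proof -
  have "2 * length w \<le> sum_list w"
    using assms(1) by (induction w) auto
  then have "length w \<le> 2"
    using assms(2) by simp
  then have "w = [] \<or> (\<exists>a. w = [a]) \<or> (\<exists>a b. w = [a, b])"
    by (auto simp: le_Suc_eq numeral_2_eq_2 length_Suc_conv)
  then show ?thesis
    using assms by auto
qed

lemma lists23_sum_list_le5_eq:
  fixes P :: "nat list \<Rightarrow> bool"
  assumes "k \<le> 5"
  shows "{w. set w \<subseteq> {2, 3} \<and> sum_list w = k \<and> P w}
    = set (filter (\<lambda>w. sum_list w = k \<and> P w) [[], [2], [3], [2, 2], [2, 3], [3, 2]])"
proof (intro set_eqI iffI)
  fix w
  assume "w \<in> {w. set w \<subseteq> {2, 3} \<and> sum_list w = k \<and> P w}"
  then have w: "set w \<subseteq> {2, 3}" "sum_list w = k" "P w"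
    by simp_all
  moreover have "sum_list w \<le> 5"
    using w(2) assms by simp
  ultimately have "w \<in> set [[], [2], [3], [2, 2], [2, 3], [3, 2]]"
    using lists23_sum_list_le5[of w] by (simp only: set_simps)
  with w show "w \<in> set (filter (\<lambda>w. sum_list w = k \<and> P w) [[], [2], [3], [2, 2], [2, 3], [3, 2]])"
    by (simp only: set_filter mem_Collect_eq)
next
  fix w
  assume "w \<in> set (filter (\<lambda>w. sum_list w = k \<and> P w) [[], [2], [3], [2, 2], [2, 3], [3, 2]])"
  then have "w \<in> set [[], [2], [3], [2, 2], [2, 3], [3, 2]]" "sum_list w = k" "P w"
    by (simp_all only: set_filter mem_Collect_eq)
  moreover from this(1) have "set w \<subseteq> {2, 3}"
    by auto
  ultimately show "w \<in> {w. set w \<subseteq> {2, 3} \<and> sum_list w = k \<and> P w}"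
    by simp
qed

(* Suc 0 rather than 1: 1 is rewritten to Suc 0 by simp, so a rule for 1 would never fire. *)
lemma palindromes23_small:
  "palindromes23 0 = {[]}" "palindromes23 (Suc 0) = {}" "palindromes23 2 = {[2]}"
  "palindromes23 3 = {[3]}" "palindromes23 4 = {[2, 2]}" "palindromes23 5 = {}"
proof -
  have "palindromes23 k = set (filter (\<lambda>w. sum_list w = k \<and> rev w = w) [[], [2], [3], [2, 2], [2, 3], [3, 2]])"
    if "k \<le> 5" for k
    unfolding palindromes23_def by (rule lists23_sum_list_le5_eq[OF that])
  then show "palindromes23 0 = {[]}" "palindromes23 (Suc 0) = {}" "palindromes23 2 = {[2]}"
    "palindromes23 3 = {[3]}" "palindromes23 4 = {[2, 2]}" "palindromes23 5 = {}"
    by simp_all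
qed

lemma rotate1_palindromes23_small: "rotate1_palindromes23 (Suc 0) = {}" "rotate1_palindromes23 2 = {[2]}"
proof -
  have "rotate1_palindromes23 k
      = set (filter (\<lambda>w. sum_list w = k \<and> rev w = rotate1 w) [[], [2], [3], [2, 2], [2, 3], [3, 2]])"
    if "k \<le> 5" for k
    unfolding rotate1_palindromes23_def by (rule lists23_sum_list_le5_eq[OF that])
  then show "rotate1_palindromes23 (Suc 0) = {}" "rotate1_palindromes23 2 = {[2]}"
    by simp_all
qed

lemma sum_list_le_3_mul_length: "set w \<subseteq> {2, 3} \<Longrightarrow> sum_list w \<le> 3 * length (w :: nat list)"
  by (induction w) auto

lemma rev_Cons_snoc_eq_self_iff: "rev (a # v @ [b]) = a # v @ [b] \<longleftrightarrow> a = b \<and> rev v = v"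
  by auto

lemma rev_eq_rotate1_Cons_iff: "rev (a # v) = rotate1 (a # v) \<longleftrightarrow> rev v = v"
  by simp

lemma palindromes23_add6:
  "palindromes23 (n + 6) = (\<lambda>v. 2 # v @ [2]) ` palindromes23 (n + 2) \<union> (\<lambda>v. 3 # v @ [3]) ` palindromes23 n"
proof (intro set_eqI iffI)
  fix w
  assume "w \<in> palindromes23 (n + 6)"
  then have w: "set w \<subseteq> {2, 3}" "sum_list w = n + 6" "rev w = w"
    by (simp_all add: palindromes23_def)
  have "2 \<le> length w"
    using sum_list_le_3_mul_length[OF w(1)] w(2) by linarith
  then obtain a u where u: "w = a # u" "u \<noteq> []"
    by (cases w) (auto simp: Suc_le_eq)
  then obtain v b where "w = a # v @ [b]"
    by (cases u rule: rev_exhaust) auto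
  with w(3) have av: "w = a # v @ [a]" "rev v = v"
    using rev_Cons_snoc_eq_self_iff by metis+
  with w(1,2) have "a \<in> {2, 3}" "set v \<subseteq> {2, 3}" "sum_list v + 2 * a = n + 6"
    by auto
  then consider "a = 2" "v \<in> palindromes23 (n + 2)" | "a = 3" "v \<in> palindromes23 n"
    using av(2) by (auto simp: palindromes23_def)
  then show "w \<in> (\<lambda>v. 2 # v @ [2]) ` palindromes23 (n + 2) \<union> (\<lambda>v. 3 # v @ [3]) ` palindromes23 n"
    by cases (use av(1) in blast)+
qed (auto simp: palindromes23_def)

lemma card_palindromes23_add6:
  "card (palindromes23 (n + 6)) = card (palindromes23 (n + 2)) + card (palindromes23 n)"
  unfolding palindromes23_add6
  by (subst card_Un_disjoint) (auto simp: finite_palindromes23 card_image inj_on_def)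

lemma rotate1_palindromes23_add3:
  "rotate1_palindromes23 (n + 3) = Cons 2 ` palindromes23 (n + 1) \<union> Cons 3 ` palindromes23 n"
proof (intro set_eqI iffI)
  fix w
  assume "w \<in> rotate1_palindromes23 (n + 3)"
  then have w: "set w \<subseteq> {2, 3}" "sum_list w = n + 3" "rev w = rotate1 w"
    by (simp_all add: rotate1_palindromes23_def)
  then obtain a v where av: "w = a # v"
    by (cases w) auto
  with w(3) have "rev v = v"
    using rev_eq_rotate1_Cons_iff by metis
  moreover have "a \<in> {2, 3}" "set v \<subseteq> {2, 3}" "sum_list v + a = n + 3"
    using w(1,2) av by auto
  ultimately consider "a = 2" "v \<in> palindromes23 (n + 1)" | "a = 3" "v \<in> palindromes23 n"
    by (auto simp: palindromes23_def)
  then show "w \<in> Cons 2 ` palindromes23 (n + 1) \<union> Cons 3 ` palindromes23 n"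
    by cases (use av in blast)+
qed (auto simp: palindromes23_def rotate1_palindromes23_def)

lemma card_rotate1_palindromes23_add3:
  "card (rotate1_palindromes23 (n + 3)) = card (palindromes23 (n + 1)) + card (palindromes23 n)"
  unfolding rotate1_palindromes23_add3
  by (subst card_Un_disjoint) (auto simp: finite_palindromes23 card_image)

section \<open>The Padovan recurrence\<close>

lemma q_add4: "q (n + 4) = q (n + 2) + q (n + 1)"
  using q.simps(5)[of n] by (simp add: numeral_eq_Suc)

lemma r_add6: "r (n + 6) = r (n + 2) + r n"
proof (cases "even n")
  case True
  then show ?thesis
    using q_add4[of "n div 2 + 1"] by (auto simp: r_def elim!: evenE)
next
  case False
  then obtain m where "n = 2 * m + 1"
    by (auto elim: oddE)
  then show ?thesis
    using q_add4[of m] by (simp add: r_def add.commute)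
qed

lemma r_small: "r (Suc 0) = 0" "r 2 = 1" "r 3 = 1" "r 4 = 1" "r 5 = 1" "r 6 = 2" "r 7 = 1" "r 8 = 2"
proof -
  have "q (Suc 0) = 0" "q 2 = 1" "q 3 = 1" "q 4 = 1" "q 5 = 2" "q 6 = 2"
    by (simp_all add: eval_nat_numeral)
  then show "r (Suc 0) = 0" "r 2 = 1" "r 3 = 1" "r 4 = 1" "r 5 = 1" "r 6 = 2" "r 7 = 1" "r 8 = 2"
    by (simp_all add: r_def)
qed

lemma eq_if_same_recurrence_6_2:
  fixes f g :: "nat \<Rightarrow> 'a :: plus"
  assumes "\<And>n. f (n + 6) = f (n + 2) + f n" "\<And>n. g (n + 6) = g (n + 2) + g n"
    and "\<And>n. n < 6 \<Longrightarrow> f n = g n"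
  shows "f n = g n"
proof (induction n rule: less_induct)
  case (less n)
  show ?case
  proof (cases "n < 6")
    case False
    then obtain m where "n = m + 6"
      using le_add_diff_inverse2 by (metis not_less)
    then show ?thesis
      using less assms(1,2) by simp
  qed (rule assms(3))
qed

lemma sum_card_palindromes23:
  "card (palindromes23 (n + 3)) + card (palindromes23 (n + 1)) + card (palindromes23 n) = 2 * r (n + 3)"
proof -
  define P where "P n = card (palindromes23 n)" for n
  have P_add6: "P (n + 6) = P (n + 2) + P n" for n
    by (simp add: P_def card_palindromes23_add6)
  have "P (n + 3) + P (n + 1) + P n = 2 * r (n + 3)"
  proof (rule eq_if_same_recurrence_6_2[where f = "\<lambda>n. P (n + 3) + P (n + 1) + P n"])
    show "P (n + 6 + 3) + P (n + 6 + 1) + P (n + 6)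
        = (P (n + 2 + 3) + P (n + 2 + 1) + P (n + 2)) + (P (n + 3) + P (n + 1) + P n)" for n
      using P_add6[of "n + 3"] P_add6[of "n + 1"] P_add6[of n] by (simp add: add.assoc)
    show "2 * r (n + 6 + 3) = 2 * r (n + 2 + 3) + 2 * r (n + 3)" for n
      using r_add6[of "n + 3"] by (simp add: add.assoc)
    have P_small: "P 0 = 1" "P 1 = 0" "P 2 = 1" "P 3 = 1" "P 4 = 1" "P 5 = 0"
      by (simp_all add: P_def palindromes23_small)
    have P_6_8: "P 6 = 2" "P 7 = 1" "P 8 = 2"
      using P_add6[of 0] P_add6[of 1] P_add6[of 2] P_small by (simp_all add: eval_nat_numeral)
    show "P (n + 3) + P (n + 1) + P n = 2 * r (n + 3)" if "n < 6" for n
    proof -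
      from that have "n \<in> {0, 1, 2, 3, 4, 5}"
        by auto
      with P_small P_6_8 r_small show ?thesis
        by (auto simp: eval_nat_numeral)
    qed
  qed
  then show ?thesis
    by (simp add: P_def)
qed

lemma card_palindromes23_add_card_rotate1_palindromes23:
  assumes "1 \<le> n"
  shows "card (palindromes23 n) + card (rotate1_palindromes23 n) = 2 * r n"
proof -
  consider "n = 1" | "n = 2" | m where "n = m + 3"
  proof -
    have "n = 1 \<or> n = 2 \<or> n = (n - 3) + 3"
      using assms by linarith
    then show thesis
      using that by blast
  qed
  then show ?thesis
  proof cases
    case 3
    then show ?thesis
      using card_rotate1_palindromes23_add3[of m] sum_card_palindromes23[of m] by simp
  qed (simp_all add: palindromes23_small rotate1_palindromes23_small r_small)
qed

theorem proposition3p3: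
  fixes n :: nat
  assumes "n \<ge> 1"
  shows "r n = num_cyc_pal_comps23 n"
  using two_mul_num_cyc_pal_comps23[OF assms] card_palindromes23_add_card_rotate1_palindromes23[OF assms]
  by simp

end
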